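(* Let $\mathbb{F}\in\{\mathbb{R},\mathbb{C}\}$, let $\Phi=\{\varphi_i\}_{i=1}^M$ be a Parseval frame for $\mathbb{F}^N$, and suppose there is $2\leq k\leq N$ such that $v_k(\Phi_K)$ is the same for all $K\subseteq[M]$ with $|K|=k$. Then $\Phi$ is equiangular.
   Context: A Parseval frame for $\mathbb{F}^N$ is a family $\{\varphi_i\}_{i=1}^M\subseteq\mathbb{F}^N$ whose $N\times M$ matrix $\Phi$ (columns $\varphi_i$) satisfies $\Phi\Phi^*=I$. It is equiangular if $\|\varphi_i\|=\|\varphi_j\|$ for all $i,j$ and $|\langle\varphi_i,\varphi_j\rangle|$ equals a common constant for all $i\ne j$. For $K\subseteq[M]$, $\Phi_K$ is the submatrix of columns indexed by $K$, and $v_k(F)=\sqrt{\det(F^*F)}$ for an $N\times k$ matrix $F$. *)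

theory Defs
  imports "Jordan_Normal_Form.Schur_Decomposition" "Jordan_Normal_Form.DL_Submatrix"
begin

text \<open>Frames are represented as N x M matrices whose columns are the frame vectors,
  indexed by 0..<M (the paper's [M]).  The scalar field is real or complex.\<close>

definition parseval_frame :: "nat \<Rightarrow> nat \<Rightarrow> 'a :: conjugatable_field mat \<Rightarrow> bool" where
  "parseval_frame N M \<Phi> \<longleftrightarrow> \<Phi> \<in> carrier_mat N M \<and> \<Phi> * mat_adjoint \<Phi> = 1\<^sub>m N"

definition vec_norm :: "'a :: {conjugatable_field, real_normed_field} vec \<Rightarrow> real" where
  "vec_norm v = sqrt (norm (v \<bullet>c v))"

definition equiangular :: "'a :: {conjugatable_field, real_normed_field} mat \<Rightarrow> bool" where
  "equiangular \<Phi> \<longleftrightarrow>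
     (\<forall>i < dim_col \<Phi>. \<forall>j < dim_col \<Phi>. vec_norm (col \<Phi> i) = vec_norm (col \<Phi> j)) \<and>
     (\<exists>c. \<forall>i < dim_col \<Phi>. \<forall>j < dim_col \<Phi>. i \<noteq> j \<longrightarrow> norm (col \<Phi> i \<bullet>c col \<Phi> j) = c)"

definition col_submatrix :: "'a mat \<Rightarrow> nat set \<Rightarrow> 'a mat" where
  "col_submatrix \<Phi> K = submatrix \<Phi> UNIV K"

text \<open>v_k(F) = sqrt(det(F^* F)); det(F^* F) is real and nonnegative, we take its modulus.\<close>
definition vol :: "'a :: {conjugatable_field, real_normed_field} mat \<Rightarrow> real" where
  "vol F = sqrt (norm (det (mat_adjoint F * F)))"

end

theory Submission
  imports Defs
begin

text \<open>The Gram matrix \<open>G = \<Phi>\<^sup>* \<Phi>\<close> of a Parseval frame in dimension \<open>N\<close> is an orthogonal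
  projection of trace \<open>N\<close>. Expanding a bordered principal minor along its last row and
  column and using \<open>G\<^sup>2 = G\<close> gives, for every list \<open>xs\<close> of column indices,
  \<open>\<Sum>\<^sub>m det G[xs @ [m]] = (N - |xs|) det G[xs]\<close>.
  Iterating, a principal minor of order \<open>j \<le> N\<close> is a positive multiple of the sum of
  the order \<open>k\<close> minors extending it, for any \<open>j \<le> k \<le> N\<close>. For \<open>k = N\<close> these are
  squared moduli of determinants, so all minors of order at most \<open>N\<close> are nonnegative,
  and equal volumes \<open>v\<^sub>k\<close> make all order \<open>k\<close> minors equal. Descending from order \<open>k\<close>,
  the minors of order 1 (the diagonal of \<open>G\<close>) and of order 2
  (\<open>G\<^sub>a\<^sub>a G\<^sub>b\<^sub>b - |G\<^sub>a\<^sub>b|\<^sup>2\<close>) are then constant as well.\<close>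

lemma dim_row_mat_adjoint[simp]: "dim_row (mat_adjoint A) = dim_col A"
  and dim_col_mat_adjoint[simp]: "dim_col (mat_adjoint A) = dim_row A"
  unfolding mat_adjoint_def by auto

lemma index_mat_adjoint[simp]:
  "i < dim_col A \<Longrightarrow> j < dim_row A \<Longrightarrow> mat_adjoint A $$ (i, j) = conjugate (A $$ (j, i))"
  unfolding mat_adjoint_def by (auto simp: mat_of_rows_def)

lemma conjugate_one[simp]: "conjugate (1::'a::conjugatable_field) = 1"
proof -
  have "conjugate (1::'a) * conjugate 1 = conjugate 1"
    by (metis conjugate_dist_mul mult_1)
  then show ?thesis
    using conjugate_zero_iff[of "1::'a"] by (metis mult_cancel_right1 one_neq_zero)
qed

lemma comm_ring_hom_conjugate: "comm_ring_hom (conjugate :: 'a::conjugatable_field \<Rightarrow> 'a)"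
  by unfold_locales (auto simp: conjugate_dist_mul conjugate_dist_add)

lemma det_mat_adjoint:
  fixes A :: "'a::conjugatable_field mat"
  assumes "A \<in> carrier_mat n n"
  shows "det (mat_adjoint A) = conjugate (det A)"
proof -
  have "mat_adjoint A = transpose_mat (map_mat conjugate A)"
    using assms by (intro eq_matI) auto
  then show ?thesis
    using assms by (simp add: det_transpose comm_ring_hom.hom_det[OF comm_ring_hom_conjugate])
qed

section \<open>Principal minors along index lists\<close>

definition principal_submat :: "'a mat \<Rightarrow> nat list \<Rightarrow> 'a mat" where
  "principal_submat G xs = mat (length xs) (length xs) (\<lambda>(a, b). G $$ (xs ! a, xs ! b))"

lemma principal_submat_carrier[simp]:
  "principal_submat G xs \<in> carrier_mat (length xs) (length xs)"
  unfolding principal_submat_def by auto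

lemma dim_row_principal_submat[simp]: "dim_row (principal_submat G xs) = length xs"
  and dim_col_principal_submat[simp]: "dim_col (principal_submat G xs) = length xs"
  unfolding principal_submat_def by auto

lemma index_principal_submat[simp]:
  "a < length xs \<Longrightarrow> b < length xs \<Longrightarrow> principal_submat G xs $$ (a, b) = G $$ (xs ! a, xs ! b)"
  unfolding principal_submat_def by auto

lemma det_principal_submat_not_distinct:
  assumes "\<not> distinct xs"
  shows "det (principal_submat G xs) = 0"
proof -
  from assms obtain i j where ij: "i < length xs" "j < length xs" "i \<noteq> j" "xs ! i = xs ! j"
    unfolding distinct_conv_nth by auto
  show ?thesis
    by (rule det_identical_rows[OF principal_submat_carrier ij(3,1,2)]) (use ij in auto)
qed

lemma det_principal_submat_singleton: "det (principal_submat G [a]) = G $$ (a, a)"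
  by (subst det_single) auto

lemma det_principal_submat_pair:
  fixes G :: "'a::comm_ring_1 mat"
  shows "det (principal_submat G [a, b]) = G $$ (a, a) * G $$ (b, b) - G $$ (a, b) * G $$ (b, a)"
proof -
  let ?H = "principal_submat G [a, b]"
  have "det ?H = (\<Sum>j<2. ?H $$ (0, j) * cofactor ?H 0 j)"
    by (rule laplace_expansion_row) auto
  also have "\<dots> = G $$ (a, a) * det (mat_delete ?H 0 0) - G $$ (a, b) * det (mat_delete ?H 0 1)"
    by (simp add: numeral_2_eq_2 cofactor_def)
  also have "det (mat_delete ?H 0 0) = G $$ (b, b)"
    by (subst det_single) (auto simp: mat_delete_def)
  also have "det (mat_delete ?H 0 1) = G $$ (b, a)"
    by (subst det_single) (auto simp: mat_delete_def)
  finally show ?thesis .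
qed

lemma det_permute_rows_cols:
  assumes A: "A \<in> carrier_mat n n" and p: "p permutes {..<n}"
  shows "det (mat n n (\<lambda>(i, j). A $$ (p i, p j))) = det A"
proof -
  let ?B = "mat n n (\<lambda>(i, j). A $$ (i, p j))"
  have p0: "p permutes {0..<n}" using p by (simp add: lessThan_atLeast0)
  have pn: "\<And>i. i < n \<Longrightarrow> p i < n" using p permutes_in_image by fastforce
  have "mat n n (\<lambda>(i, j). A $$ (p i, p j)) = mat n n (\<lambda>(i, j). ?B $$ (p i, j))"
    using pn by (intro eq_matI) auto
  then have "det (mat n n (\<lambda>(i, j). A $$ (p i, p j))) = signof p * det ?B"
    using det_permute_rows[OF _ p0, of ?B] by simp
  also have "det ?B = det (mat n n (\<lambda>(i, j). transpose_mat A $$ (p i, j)))"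
    using pn A by (subst det_transpose[symmetric]) (auto intro!: arg_cong[of _ _ det])
  also have "\<dots> = signof p * det A"
    using det_permute_rows[OF _ p0, of "transpose_mat A"] det_transpose[OF A] A by simp
  finally show ?thesis by (simp add: sign_def)
qed

lemma det_principal_submat_mset_eq:
  assumes "mset xs = mset ys"
  shows "det (principal_submat G xs) = det (principal_submat G ys)"
proof -
  obtain p where p: "p permutes {..<length ys}" and xs: "permute_list p ys = xs"
    using mset_eq_permutation[OF assms] .
  have pn: "\<And>i. i < length ys \<Longrightarrow> p i < length ys"
    using p permutes_in_image by fastforce
  have "principal_submat G xs
      = mat (length ys) (length ys) (\<lambda>(i, j). principal_submat G ys $$ (p i, p j))"
    using p pn by (intro eq_matI) (auto simp: xs[symmetric] permute_list_nth)
  then show ?thesis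
    using det_permute_rows_cols[OF principal_submat_carrier p] by simp
qed

lemma det_principal_submat_snoc:
  fixes G :: "'a::comm_ring_1 mat" and xs :: "nat list"
  defines "H \<equiv> principal_submat G xs" and "n \<equiv> length xs"
  shows "det (principal_submat G (xs @ [m])) = G $$ (m, m) * det H
     - (\<Sum>a<n. \<Sum>b<n. G $$ (xs ! a, m) * G $$ (m, xs ! b) * cofactor H a b)"
proof -
  let ?H' = "principal_submat G (xs @ [m])"
  have H': "?H' \<in> carrier_mat (Suc n) (Suc n)"
    using principal_submat_carrier[of G "xs @ [m]"] by (simp add: n_def)
  have corner: "cofactor ?H' n n = det H"
  proof -
    have "mat_delete ?H' n n = H"
      by (rule eq_matI) (auto simp: mat_delete_def H_def n_def nth_append)
    then show ?thesis by (simp add: cofactor_def flip: mult_2 power_mult)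
  qed
  have border: "?H' $$ (a, n) * cofactor ?H' a n
      = - (\<Sum>b<n. G $$ (xs ! a, m) * G $$ (m, xs ! b) * cofactor H a b)" if a: "a < n" for a
  proof -
    obtain n' where n': "n = Suc n'" using a by (cases n) auto
    let ?X = "mat_delete ?H' a n"
    have X: "?X \<in> carrier_mat n n" using mat_delete_carrier[OF H'] by simp
    have "det ?X = (\<Sum>b<n. ?X $$ (n', b) * cofactor ?X n' b)"
      by (rule laplace_expansion_row[OF X]) (simp add: n')
    also have "\<dots> = (\<Sum>b<n. G $$ (m, xs ! b) * ((-1) ^ (n' + b) * det (mat_delete H a b)))"
    proof (rule sum.cong[OF refl])
      fix b assume b: "b \<in> {..<n}"
      have "?X $$ (n', b) = G $$ (m, xs ! b)"
        using a b n' by (auto simp: mat_delete_def n_def nth_append)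
      moreover have "mat_delete ?X n' b = mat_delete H a b"
        using a b n' by (intro eq_matI) (auto simp: mat_delete_def H_def n_def nth_append)
      ultimately show "?X $$ (n', b) * cofactor ?X n' b
          = G $$ (m, xs ! b) * ((-1) ^ (n' + b) * det (mat_delete H a b))"
        by (simp add: cofactor_def)
    qed
    finally have "?H' $$ (a, n) * cofactor ?H' a n = G $$ (xs ! a, m) * (-1) ^ (a + n)
        * (\<Sum>b<n. G $$ (m, xs ! b) * ((-1) ^ (n' + b) * det (mat_delete H a b)))"
      using a by (simp add: cofactor_def n_def nth_append)
    also have "\<dots> = (\<Sum>b<n. G $$ (xs ! a, m) * G $$ (m, xs ! b)
        * ((-1) ^ (a + n) * (-1) ^ (n' + b) * det (mat_delete H a b)))"
      by (simp add: sum_distrib_left ac_simps)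
    also have "\<dots> = - (\<Sum>b<n. G $$ (xs ! a, m) * G $$ (m, xs ! b) * cofactor H a b)"
    proof -
      have "(-1::'a) ^ (a + n) * (-1) ^ (n' + b) = - ((-1) ^ (a + b))" for b
        by (simp add: n' power_add mult.assoc)
      then show ?thesis by (simp add: cofactor_def flip: sum_negf)
    qed
    finally show ?thesis .
  qed
  have "det ?H' = (\<Sum>a<Suc n. ?H' $$ (a, n) * cofactor ?H' a n)"
    by (rule laplace_expansion_column[OF H']) simp
  also have "\<dots> = (\<Sum>a<n. ?H' $$ (a, n) * cofactor ?H' a n) + G $$ (m, m) * det H"
    using corner unfolding n_def by (simp add: nth_append)
  finally show ?thesis by (simp add: border sum_negf)
qed

lemma sum_det_principal_submat_snoc:
  fixes G :: "'a::comm_ring_1 mat"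
  assumes G: "G \<in> carrier_mat M M" and idem: "G * G = G"
    and trace: "(\<Sum>i<M. G $$ (i, i)) = of_nat N"
    and xs: "set xs \<subseteq> {..<M}" "length xs \<le> N"
  shows "(\<Sum>m<M. det (principal_submat G (xs @ [m])))
    = of_nat (N - length xs) * det (principal_submat G xs)"
proof -
  let ?n = "length xs" and ?H = "principal_submat G xs"
  have idem_index: "(\<Sum>m<M. G $$ (a, m) * G $$ (m, b)) = G $$ (a, b)" if "a < M" "b < M" for a b
  proof -
    have "(G * G) $$ (a, b) = (\<Sum>m<M. G $$ (a, m) * G $$ (m, b))"
      using G that by (auto simp: scalar_prod_def lessThan_atLeast0 intro!: sum.cong)
    then show ?thesis by (simp add: idem)
  qed
  have xs_M: "xs ! a < M" if "a < ?n" for a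
    using xs that nth_mem by blast
  \<comment> \<open>Idempotence collapses the sum over \<open>m\<close>, leaving \<open>length xs\<close> Laplace expansions of \<open>det H\<close>.\<close>
  have "(\<Sum>m<M. \<Sum>a<?n. \<Sum>b<?n. G $$ (xs ! a, m) * G $$ (m, xs ! b) * cofactor ?H a b)
      = (\<Sum>a<?n. \<Sum>b<?n. (\<Sum>m<M. G $$ (xs ! a, m) * G $$ (m, xs ! b)) * cofactor ?H a b)"
    by (simp add: sum_distrib_right sum.swap[of _ "{..<M}"])
  also have "\<dots> = (\<Sum>a<?n. \<Sum>b<?n. ?H $$ (a, b) * cofactor ?H a b)"
    using idem_index xs_M by (intro sum.cong refl) auto
  also have "\<dots> = (\<Sum>a<?n. det ?H)"
    by (intro sum.cong refl laplace_expansion_row[symmetric]) auto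
  finally have border: "(\<Sum>m<M. \<Sum>a<?n. \<Sum>b<?n. G $$ (xs ! a, m) * G $$ (m, xs ! b) * cofactor ?H a b)
      = of_nat ?n * det ?H" by simp
  have "(\<Sum>m<M. det (principal_submat G (xs @ [m]))) = (\<Sum>m<M. G $$ (m, m) * det ?H)
      - (\<Sum>m<M. \<Sum>a<?n. \<Sum>b<?n. G $$ (xs ! a, m) * G $$ (m, xs ! b) * cofactor ?H a b)"
    by (simp add: det_principal_submat_snoc sum_subtractf)
  also have "\<dots> = (\<Sum>i<M. G $$ (i, i)) * det ?H - of_nat ?n * det ?H"
    by (simp add: border sum_distrib_right)
  finally show ?thesis
    using xs(2) by (simp add: trace of_nat_diff algebra_simps)
qed

section \<open>Sums over extensions of index lists\<close>

fun extension_sum :: "(nat list \<Rightarrow> 'a::comm_monoid_add) \<Rightarrow> nat \<Rightarrow> nat list \<Rightarrow> nat \<Rightarrow> 'a" where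
  "extension_sum f M xs 0 = f xs"
| "extension_sum f M xs (Suc r) = (\<Sum>m<M. extension_sum f M (xs @ [m]) r)"

lemma extension_sum_eq_prod:
  fixes f :: "nat list \<Rightarrow> 'a::comm_semiring_1"
  assumes step: "\<And>ys. set ys \<subseteq> {..<M} \<Longrightarrow> length ys < N \<Longrightarrow>
      (\<Sum>m<M. f (ys @ [m])) = of_nat (N - length ys) * f ys"
    and "set xs \<subseteq> {..<M}" and "length xs + r \<le> N"
  shows "extension_sum f M xs r = of_nat (\<Prod>t<r. N - length xs - t) * f xs"
  using assms(2,3)
proof (induction r arbitrary: xs)
  case 0
  then show ?case by simp
next
  case (Suc r)
  have "extension_sum f M xs (Suc r)
      = (\<Sum>m<M. of_nat (\<Prod>t<r. N - Suc (length xs) - t) * f (xs @ [m]))"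
    using Suc by (auto intro!: sum.cong)
  also have "\<dots> = of_nat (\<Prod>t<r. N - Suc (length xs) - t) * (of_nat (N - length xs) * f xs)"
    using Suc.prems by (simp add: step flip: sum_distrib_left)
  also have "\<dots> = of_nat (\<Prod>t<Suc r. N - length xs - t) * f xs"
    by (simp add: prod.lessThan_Suc_shift ac_simps del: prod.lessThan_Suc)
  finally show ?case .
qed

lemma extension_sum_not_distinct:
  assumes "\<And>zs. \<not> distinct zs \<Longrightarrow> f zs = 0" and "\<not> distinct xs"
  shows "extension_sum f M xs r = 0"
  using assms(2) by (induction r arbitrary: xs) (auto simp: assms(1))

lemma extension_sum_distinct_const:
  assumes const: "\<And>zs. set zs \<subseteq> {..<M} \<Longrightarrow> length zs = k \<Longrightarrow> distinct zs \<Longrightarrow> f zs = c"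
    and not_distinct: "\<And>zs. \<not> distinct zs \<Longrightarrow> f zs = 0"
    and "set xs \<subseteq> {..<M}" and "distinct xs" and "length xs + r = k"
  shows "extension_sum f M xs r = of_nat (\<Prod>t<r. M - length xs - t) * c"
  using assms(3-5)
proof (induction r arbitrary: xs)
  case 0
  then show ?case by (simp add: const)
next
  case (Suc r)
  let ?c = "of_nat (\<Prod>t<r. M - Suc (length xs) - t) * c"
  have "extension_sum f M xs (Suc r) = (\<Sum>m\<in>{..<M} - set xs. ?c)"
  proof -
    have "extension_sum f M (xs @ [m]) r = (if m \<in> set xs then 0 else ?c)" if "m < M" for m
      using Suc that by (auto simp: extension_sum_not_distinct[OF not_distinct])
    then show ?thesis by (simp add: sum.If_cases Diff_eq Compl_eq)
  qed
  also have "\<dots> = of_nat (M - length xs) * ?c"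
    using Suc.prems by (simp add: card_Diff_subset distinct_card)
  also have "\<dots> = of_nat (\<Prod>t<Suc r. M - length xs - t) * c"
    by (simp add: prod.lessThan_Suc_shift ac_simps del: prod.lessThan_Suc)
  finally show ?case .
qed

lemma extension_sum_nonneg:
  fixes f :: "nat list \<Rightarrow> 'a::ordered_comm_monoid_add"
  assumes "\<And>zs. set zs \<subseteq> {..<M} \<Longrightarrow> length zs = length xs + r \<Longrightarrow> 0 \<le> f zs"
    and "set xs \<subseteq> {..<M}"
  shows "0 \<le> extension_sum f M xs r"
  using assms by (induction r arbitrary: xs) (auto intro!: sum_nonneg)

lemma idempotent_principal_minors_descend:
  fixes G :: "'a::field_char_0 mat"
  assumes G: "G \<in> carrier_mat M M" "G * G = G" and trace: "(\<Sum>i<M. G $$ (i, i)) = of_nat N"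
    and "j \<le> k" "k \<le> N"
    and minors: "\<And>zs. set zs \<subseteq> {..<M} \<Longrightarrow> length zs = k \<Longrightarrow> distinct zs \<Longrightarrow>
      det (principal_submat G zs) = e"
    and xs: "set xs \<subseteq> {..<M}" "length xs = j" "distinct xs"
  shows "det (principal_submat G xs)
    = e * of_nat (\<Prod>t<k - j. M - j - t) / of_nat (\<Prod>t<k - j. N - j - t)"
proof -
  define f where "f ys = det (principal_submat G ys)" for ys
  have step: "(\<Sum>m<M. f (ys @ [m])) = of_nat (N - length ys) * f ys"
    if "set ys \<subseteq> {..<M}" "length ys < N" for ys
    using sum_det_principal_submat_snoc[OF G trace that(1)] that(2) by (simp add: f_def)
  have "extension_sum f M xs (k - j) = of_nat (\<Prod>t<k - j. N - j - t) * f xs"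
    using extension_sum_eq_prod[OF step xs(1)] assms(4,5) xs(2) by simp
  \<comment> \<open>The product counts the distinct extensions of \<open>xs\<close> to length \<open>k\<close>; by truncated
    subtraction it is \<open>0\<close> when \<open>M < k\<close>.\<close>
  moreover have "extension_sum f M xs (k - j) = of_nat (\<Prod>t<k - j. M - j - t) * e"
    using extension_sum_distinct_const[of M k f e, OF _ _ xs(1,3)] assms(4) xs(2)
    by (simp add: f_def minors det_principal_submat_not_distinct)
  moreover have "(\<Prod>t<k - j. N - j - t) \<noteq> 0"
    using assms(4,5) by auto
  ultimately show ?thesis
    by (simp add: f_def field_simps)
qed

section \<open>Gram matrices of Parseval frames\<close>

lemma index_gram:
  assumes "\<Phi> \<in> carrier_mat N M" "i < M" "j < M"
  shows "(mat_adjoint \<Phi> * \<Phi>) $$ (i, j) = (\<Sum>r<N. conjugate (\<Phi> $$ (r, i)) * \<Phi> $$ (r, j))"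
  using assms by (auto simp: scalar_prod_def lessThan_atLeast0 intro!: sum.cong)

lemma gram_carrier: "\<Phi> \<in> carrier_mat N M \<Longrightarrow> mat_adjoint \<Phi> * \<Phi> \<in> carrier_mat M M"
  by auto

lemma gram_conjugate_sym:
  assumes "\<Phi> \<in> carrier_mat N M" "i < M" "j < M"
  shows "(mat_adjoint \<Phi> * \<Phi>) $$ (j, i) = conjugate ((mat_adjoint \<Phi> * \<Phi>) $$ (i, j))"
  unfolding index_gram[OF assms] index_gram[OF assms(1,3,2)]
  by (simp add: sum_conjugate conjugate_dist_mul mult.commute)

lemma cscalar_prod_col_eq_gram:
  assumes "\<Phi> \<in> carrier_mat N M" "i < M" "j < M"
  shows "col \<Phi> i \<bullet>c col \<Phi> j = (mat_adjoint \<Phi> * \<Phi>) $$ (j, i)"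
  using assms by (auto simp: index_gram scalar_prod_def lessThan_atLeast0 mult.commute intro!: sum.cong)

lemma parseval_gram_idempotent:
  assumes "parseval_frame N M \<Phi>"
  shows "mat_adjoint \<Phi> * \<Phi> * (mat_adjoint \<Phi> * \<Phi>) = mat_adjoint \<Phi> * \<Phi>"
proof -
  have \<Phi>: "\<Phi> \<in> carrier_mat N M" and A: "mat_adjoint \<Phi> \<in> carrier_mat M N"
    and id: "\<Phi> * mat_adjoint \<Phi> = 1\<^sub>m N"
    using assms by (auto simp: parseval_frame_def)
  have "mat_adjoint \<Phi> * \<Phi> * (mat_adjoint \<Phi> * \<Phi>) = mat_adjoint \<Phi> * (\<Phi> * (mat_adjoint \<Phi> * \<Phi>))"
    by (rule assoc_mult_mat[OF A \<Phi> mult_carrier_mat[OF A \<Phi>]])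
  also have "\<dots> = mat_adjoint \<Phi> * (\<Phi> * mat_adjoint \<Phi> * \<Phi>)"
    by (simp add: assoc_mult_mat[OF \<Phi> A \<Phi>])
  finally show ?thesis
    using \<Phi> A by (simp add: id)
qed

lemma parseval_gram_trace:
  assumes "parseval_frame N M \<Phi>"
  shows "(\<Sum>i<M. (mat_adjoint \<Phi> * \<Phi>) $$ (i, i)) = of_nat N"
proof -
  have \<Phi>: "\<Phi> \<in> carrier_mat N M" and id: "\<Phi> * mat_adjoint \<Phi> = 1\<^sub>m N"
    using assms by (auto simp: parseval_frame_def)
  have "(\<Sum>i<M. (mat_adjoint \<Phi> * \<Phi>) $$ (i, i))
      = (\<Sum>i<M. \<Sum>r<N. conjugate (\<Phi> $$ (r, i)) * \<Phi> $$ (r, i))"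
    by (intro sum.cong refl) (rule index_gram[OF \<Phi>], auto)
  also have "\<dots> = (\<Sum>r<N. \<Sum>i<M. \<Phi> $$ (r, i) * conjugate (\<Phi> $$ (r, i)))"
    by (subst sum.swap) (simp add: mult.commute)
  also have "\<dots> = (\<Sum>r<N. (\<Phi> * mat_adjoint \<Phi>) $$ (r, r))"
    using \<Phi> by (auto simp: scalar_prod_def lessThan_atLeast0 intro!: sum.cong)
  finally show ?thesis by (simp add: id)
qed

definition select_cols :: "'a mat \<Rightarrow> nat list \<Rightarrow> 'a mat" where
  "select_cols \<Phi> zs = mat (dim_row \<Phi>) (length zs) (\<lambda>(r, a). \<Phi> $$ (r, zs ! a))"

lemma principal_submat_gram:
  assumes "\<Phi> \<in> carrier_mat N M" "set zs \<subseteq> {..<M}"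
  shows "principal_submat (mat_adjoint \<Phi> * \<Phi>) zs = mat_adjoint (select_cols \<Phi> zs) * select_cols \<Phi> zs"
proof -
  have "zs ! a < M" if "a < length zs" for a
    using assms(2) that nth_mem by blast
  then show ?thesis
    using assms(1) by (intro eq_matI) (auto simp: index_gram select_cols_def scalar_prod_def lessThan_atLeast0)
qed

lemma col_submatrix_eq_select_cols:
  assumes "\<Phi> \<in> carrier_mat N M" "K \<subseteq> {..<M}"
  shows "col_submatrix \<Phi> K = select_cols \<Phi> (map (pick K) [0..<card K])"
proof -
  have rows: "{i. i < N \<and> i \<in> UNIV} = {..<N}" and cols: "{j. j < M \<and> j \<in> K} = K"
    using assms(2) by auto
  show ?thesis
    unfolding col_submatrix_def select_cols_def using assms(1)
    by (intro eq_matI) (auto simp: dim_submatrix submatrix_index rows cols pick_UNIV)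
qed

lemma
  assumes "finite K"
  shows distinct_map_pick: "distinct (map (pick K) [0..<card K])"
    and set_map_pick: "set (map (pick K) [0..<card K]) = K"
proof -
  show distinct: "distinct (map (pick K) [0..<card K])"
    by (auto simp: distinct_map inj_on_def) (metis nat_neq_iff pick_mono_le)
  have "set (map (pick K) [0..<card K]) \<subseteq> K"
    by (auto intro: pick_in_set_le)
  moreover have "card (set (map (pick K) [0..<card K])) = card K"
    using distinct_card[OF distinct] by simp
  ultimately show "set (map (pick K) [0..<card K]) = K"
    using assms card_subset_eq by blast
qed

lemma vol_col_submatrix_set:
  assumes \<Phi>: "\<Phi> \<in> carrier_mat N M" and zs: "distinct zs" "set zs \<subseteq> {..<M}"
  shows "vol (col_submatrix \<Phi> (set zs)) = sqrt (norm (det (principal_submat (mat_adjoint \<Phi> * \<Phi>) zs)))"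
proof -
  define ps where "ps = map (pick (set zs)) [0..<card (set zs)]"
  have ps: "distinct ps" "set ps = set zs"
    unfolding ps_def using distinct_map_pick set_map_pick by auto
  have "vol (col_submatrix \<Phi> (set zs)) = sqrt (norm (det (principal_submat (mat_adjoint \<Phi> * \<Phi>) ps)))"
    using \<Phi> zs(2) ps(2) unfolding vol_def
    by (simp add: col_submatrix_eq_select_cols principal_submat_gram ps_def)
  also have "det (principal_submat (mat_adjoint \<Phi> * \<Phi>) ps) = det (principal_submat (mat_adjoint \<Phi> * \<Phi>) zs)"
    using ps zs(1) set_eq_iff_mset_eq_distinct by (metis det_principal_submat_mset_eq)
  finally show ?thesis .
qed

lemma det_gram_square_nonneg:
  fixes B :: "'a::conjugatable_ordered_field mat"
  assumes "B \<in> carrier_mat n n"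
  shows "0 \<le> det (mat_adjoint B * B)"
proof -
  have "mat_adjoint B \<in> carrier_mat n n"
    using assms by auto
  then have "det (mat_adjoint B * B) = det B * conjugate (det B)"
    using assms by (simp add: det_mult det_mat_adjoint mult.commute)
  then show ?thesis
    by (simp add: conjugate_square_positive)
qed

lemma parseval_principal_minor_nonneg:
  fixes \<Phi> :: "'a::{conjugatable_ordered_field, real_normed_field} mat"
  assumes nonneg_iff: "\<And>x::'a. 0 \<le> x \<longleftrightarrow> (\<exists>r\<ge>0. x = of_real r)"
    and \<Phi>: "parseval_frame N M \<Phi>" and xs: "set xs \<subseteq> {..<M}" "length xs \<le> N"
  shows "0 \<le> det (principal_submat (mat_adjoint \<Phi> * \<Phi>) xs)"
proof -
  define f where "f ys = det (principal_submat (mat_adjoint \<Phi> * \<Phi>) ys)" for ys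
  define r where "r = N - length xs"
  define P where "P = (\<Prod>t<r. N - length xs - t)"
  have carrier: "\<Phi> \<in> carrier_mat N M"
    using \<Phi> by (simp add: parseval_frame_def)
  have step: "(\<Sum>m<M. f (ys @ [m])) = of_nat (N - length ys) * f ys"
    if "set ys \<subseteq> {..<M}" "length ys < N" for ys
    using sum_det_principal_submat_snoc[OF gram_carrier[OF carrier] parseval_gram_idempotent[OF \<Phi>]
        parseval_gram_trace[OF \<Phi>] that(1)] that(2)
    by (simp add: f_def)
  have "of_nat P * f xs = extension_sum f M xs r"
    using extension_sum_eq_prod[OF step xs(1)] xs(2) by (simp add: r_def P_def)
  moreover have "0 \<le> extension_sum f M xs r"
  proof (rule extension_sum_nonneg[OF _ xs(1)])
    fix zs assume "set zs \<subseteq> {..<M}" "length zs = length xs + r"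
    then show "0 \<le> f zs"
      using carrier xs(2) det_gram_square_nonneg[of "select_cols \<Phi> zs" N]
      by (simp add: f_def r_def principal_submat_gram select_cols_def)
  qed
  moreover have "P > 0"
    by (auto simp: P_def r_def)
  ultimately obtain s where "s \<ge> 0" "of_nat P * f xs = of_real s"
    using nonneg_iff by metis
  then have "f xs = of_real (s / real P)"
    using \<open>P > 0\<close> by (simp add: field_simps)
  moreover have "s / real P \<ge> 0"
    using \<open>s \<ge> 0\<close> by simp
  ultimately show ?thesis
    using nonneg_iff unfolding f_def by blast
qed

text \<open>The two assumptions on the scalars hold for \<open>\<real>\<close> and \<open>\<complex>\<close>, whose order in
  \<^class>\<open>conjugatable_ordered_field\<close> makes the nonnegative elements the nonnegative reals.\<close>

lemma parseval_equal_volumes_imp_equiangular: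
  fixes \<Phi> :: "'a::{conjugatable_ordered_field, real_normed_field} mat"
  assumes nonneg_iff: "\<And>x::'a. 0 \<le> x \<longleftrightarrow> (\<exists>r\<ge>0. x = of_real r)"
    and norm_conjugate: "\<And>x::'a. norm (conjugate x) = norm x"
    and \<Phi>: "parseval_frame N M \<Phi>" and k: "2 \<le> k" "k \<le> N"
    and vol: "\<forall>K \<subseteq> {0..<M}. card K = k \<longrightarrow> vol (col_submatrix \<Phi> K) = c"
  shows "equiangular \<Phi>"
proof -
  define G where "G = mat_adjoint \<Phi> * \<Phi>"
  have carrier: "\<Phi> \<in> carrier_mat N M"
    using \<Phi> by (simp add: parseval_frame_def)
  have minors: "det (principal_submat G zs) = of_real (c\<^sup>2)"
    if zs: "set zs \<subseteq> {..<M}" "length zs = k" "distinct zs" for zs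
  proof -
    obtain r where r: "r \<ge> 0" "det (principal_submat G zs) = of_real r"
      using parseval_principal_minor_nonneg[OF nonneg_iff \<Phi> zs(1)] zs(2) k(2) nonneg_iff
      unfolding G_def by auto
    have "set zs \<subseteq> {0..<M}"
      using zs(1) by auto
    then have "vol (col_submatrix \<Phi> (set zs)) = c"
      using vol distinct_card[OF zs(3)] zs(2) by simp
    then have "sqrt r = c"
      using vol_col_submatrix_set[OF carrier zs(3,1)] r by (simp add: G_def)
    then have "r = c\<^sup>2"
      using r(1) by auto
    then show ?thesis
      using r(2) by simp
  qed
  note descend = idempotent_principal_minors_descend[OF gram_carrier[OF carrier]
      parseval_gram_idempotent[OF \<Phi>] parseval_gram_trace[OF \<Phi>], folded G_def, OF _ k(2) minors]
  define g :: 'a where "g = of_real (c\<^sup>2) * of_nat (\<Prod>t<k - 1. M - 1 - t) / of_nat (\<Prod>t<k - 1. N - 1 - t)"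
  define d :: 'a where "d = of_real (c\<^sup>2) * of_nat (\<Prod>t<k - 2. M - 2 - t) / of_nat (\<Prod>t<k - 2. N - 2 - t)"
  have diag: "G $$ (a, a) = g" if "a < M" for a
  proof -
    have "det (principal_submat G [a]) = g"
      unfolding g_def by (rule descend) (use that k in auto)
    then show ?thesis
      by (simp add: det_principal_submat_singleton)
  qed
  have off_diag: "norm (G $$ (a, b)) = sqrt (norm (g * g - d))" if ab: "a < M" "b < M" "a \<noteq> b" for a b
  proof -
    have "det (principal_submat G [a, b]) = d"
      unfolding d_def by (rule descend) (use ab k in auto)
    then have "G $$ (a, a) * G $$ (b, b) - G $$ (a, b) * G $$ (b, a) = d"
      by (simp add: det_principal_submat_pair)
    then have "g * g - G $$ (a, b) * conjugate (G $$ (a, b)) = d"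
      using ab diag gram_conjugate_sym[OF carrier ab(1,2)] by (simp add: G_def)
    then have product: "G $$ (a, b) * conjugate (G $$ (a, b)) = g * g - d"
      by (simp add: algebra_simps)
    have "norm (G $$ (a, b)) ^ 2 = norm (G $$ (a, b)) * norm (conjugate (G $$ (a, b)))"
      by (simp add: norm_conjugate power2_eq_square)
    also have "\<dots> = norm (g * g - d)"
      unfolding product[symmetric] norm_mult ..
    finally show ?thesis
      using real_sqrt_unique[OF _ norm_ge_zero] by metis
  qed
  have inner: "col \<Phi> i \<bullet>c col \<Phi> j = G $$ (j, i)" if "i < M" "j < M" for i j
    using cscalar_prod_col_eq_gram[OF carrier that] by (simp add: G_def)
  have dim: "dim_col \<Phi> = M"
    using carrier by simp
  show ?thesis
    unfolding equiangular_def dim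
  proof (intro conjI allI impI exI)
    fix i j assume "i < M" "j < M"
    then show "vec_norm (col \<Phi> i) = vec_norm (col \<Phi> j)"
      using diag by (simp add: vec_norm_def inner)
  next
    fix i j assume "i < M" "j < M" "i \<noteq> j"
    then show "norm (col \<Phi> i \<bullet>c col \<Phi> j) = sqrt (norm (g * g - d))"
      using off_diag by (simp add: inner)
  qed
qed

lemma nonneg_iff_of_real_real: "0 \<le> (x::real) \<longleftrightarrow> (\<exists>r\<ge>0. x = of_real r)"
  by auto

lemma nonneg_iff_of_real_complex: "0 \<le> (z::complex) \<longleftrightarrow> (\<exists>r\<ge>0. z = of_real r)"
  by (auto simp: less_eq_complex_def complex_eq_iff)

theorem corollary10:
  shows "(\<forall>(N::nat) (M::nat) (k::nat) (\<Phi> :: real mat).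
            parseval_frame N M \<Phi> \<longrightarrow> 2 \<le> k \<longrightarrow> k \<le> N \<longrightarrow>
            (\<exists>c. \<forall>K \<subseteq> {0..<M}. card K = k \<longrightarrow> vol (col_submatrix \<Phi> K) = c) \<longrightarrow>
            equiangular \<Phi>)
       \<and> (\<forall>(N::nat) (M::nat) (k::nat) (\<Phi> :: complex mat).
            parseval_frame N M \<Phi> \<longrightarrow> 2 \<le> k \<longrightarrow> k \<le> N \<longrightarrow>
            (\<exists>c. \<forall>K \<subseteq> {0..<M}. card K = k \<longrightarrow> vol (col_submatrix \<Phi> K) = c) \<longrightarrow>
            equiangular \<Phi>)"
proof (intro conjI allI impI; elim exE)
  fix N M k :: nat and \<Phi> :: "real mat" and c
  assume frame: "parseval_frame N M \<Phi>" "2 \<le> k" "k \<le> N"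
    "\<forall>K \<subseteq> {0..<M}. card K = k \<longrightarrow> vol (col_submatrix \<Phi> K) = c"
  show "equiangular \<Phi>"
    by (rule parseval_equal_volumes_imp_equiangular[OF nonneg_iff_of_real_real _ frame]) simp
next
  fix N M k :: nat and \<Phi> :: "complex mat" and c
  assume frame: "parseval_frame N M \<Phi>" "2 \<le> k" "k \<le> N"
    "\<forall>K \<subseteq> {0..<M}. card K = k \<longrightarrow> vol (col_submatrix \<Phi> K) = c"
  show "equiangular \<Phi>"
    by (rule parseval_equal_volumes_imp_equiangular[OF nonneg_iff_of_real_complex _ frame]) simp
qed

end
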